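(* For the asynchronous Sinkhorn iteration described in the context, initialized with $v^{(0)}=1_Y$ (all ones), and any $q_{\mathrm{target}}\in(0,1)$, there exists $n\le 2+\frac{C}{\varepsilon(1-q_{\mathrm{target}})}$ with $q^{(n)}\ge q_{\mathrm{target}}$, where $C=\max_{x,y}c(x,y)$. Moreover, $\langle u^{(\ell)},\mu\rangle\le\exp(C/\varepsilon)$ for all $\ell\ge1$.
   Context: $X,Y$ finite sets, $\mu\in\mathcal P(X)$, $\nu\in\mathcal P(Y)$ with strictly positive entries, $c\in\mathbb R_+^{X\times Y}$, $\varepsilon>0$, kernel $K(x,y)=\exp(-c(x,y)/\varepsilon)\mu(x)\nu(y)$. Asynchronous Sinkhorn iteration: given $v^{(0)}\in\mathbb R_{++}^Y$, for $\ell\ge0$: $u^{(\ell+1)}=\mu\oslash(Kv^{(\ell)})$, $\hat v^{(\ell+1)}=\nu\oslash(K^\top u^{(\ell+1)})$, $v^{(\ell+1)}=\min\{v^{(\ell)},\hat v^{(\ell+1)}\}$ componentwise, $\pi^{(\ell+1)}=\mathrm{diag}(u^{(\ell+1)})K\mathrm{diag}(v^{(\ell+1)})$, $q^{(\ell+1)}=\sum_{x,y}\pi^{(\ell+1)}(x,y)$; $\oslash$ is componentwise division. *)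

theory Defs
  imports Complex_Main
begin

definition sk_kernel :: "real \<Rightarrow> ('x \<Rightarrow> 'y \<Rightarrow> real) \<Rightarrow> ('x \<Rightarrow> real) \<Rightarrow> ('y \<Rightarrow> real) \<Rightarrow> 'x \<Rightarrow> 'y \<Rightarrow> real" where
  "sk_kernel eps c mu nu x y = exp (- c x y / eps) * mu x * nu y"

definition u_step :: "('x::finite \<Rightarrow> 'y::finite \<Rightarrow> real) \<Rightarrow> ('x \<Rightarrow> real) \<Rightarrow> ('y \<Rightarrow> real) \<Rightarrow> 'x \<Rightarrow> real" where
  "u_step K mu v = (\<lambda>x. mu x / (\<Sum>y\<in>UNIV. K x y * v y))"

definition v_step :: "('x::finite \<Rightarrow> 'y::finite \<Rightarrow> real) \<Rightarrow> ('y \<Rightarrow> real) \<Rightarrow> ('x \<Rightarrow> real) \<Rightarrow> 'y \<Rightarrow> real" where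
  "v_step K nu u = (\<lambda>y. nu y / (\<Sum>x\<in>UNIV. K x y * u x))"

fun async_v :: "('x::finite \<Rightarrow> 'y::finite \<Rightarrow> real) \<Rightarrow> ('x \<Rightarrow> real) \<Rightarrow> ('y \<Rightarrow> real) \<Rightarrow> nat \<Rightarrow> 'y \<Rightarrow> real" where
  "async_v K mu nu 0 = (\<lambda>_. 1)"
| "async_v K mu nu (Suc l) =
     (\<lambda>y. min (async_v K mu nu l y) (v_step K nu (u_step K mu (async_v K mu nu l)) y))"

text \<open>u^(l) for l \<ge> 1: u^(l+1) = mu ./ (K v^(l)). (Value at l = 0 is meaningless.)\<close>
definition async_u :: "('x::finite \<Rightarrow> 'y::finite \<Rightarrow> real) \<Rightarrow> ('x \<Rightarrow> real) \<Rightarrow> ('y \<Rightarrow> real) \<Rightarrow> nat \<Rightarrow> 'x \<Rightarrow> real" where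
  "async_u K mu nu l = u_step K mu (async_v K mu nu (l - 1))"

text \<open>q^(l) = total mass of pi^(l) = diag(u^(l)) K diag(v^(l)), for l \<ge> 1.\<close>
definition async_q :: "('x::finite \<Rightarrow> 'y::finite \<Rightarrow> real) \<Rightarrow> ('x \<Rightarrow> real) \<Rightarrow> ('y \<Rightarrow> real) \<Rightarrow> nat \<Rightarrow> real" where
  "async_q K mu nu l = (\<Sum>x\<in>UNIV. \<Sum>y\<in>UNIV. async_u K mu nu l x * K x y * async_v K mu nu l y)"

end

theory Submission imports Defs begin

text \<open>
  With \<open>\<kappa> = exp (-C/\<epsilon>)\<close> the kernel is squeezed between \<open>\<kappa> \<mu>(x) \<nu>(y)\<close> and \<open>\<mu>(x) \<nu>(y)\<close>.
  The iterates \<open>v\<^sub>\<ell>\<close> decrease, hence the \<open>u\<^sub>\<ell>\<close> increase, and the potential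
  \<open>\<Phi>\<^sub>\<ell> = \<Sum>\<^sub>x \<mu>(x) ln u\<^sub>\<ell>(x)\<close> grows by at least \<open>1 - q\<^sub>\<ell>\<close> per step: indeed
  \<open>q\<^sub>\<ell> = \<Sum>\<^sub>x \<mu>(x) u\<^sub>\<ell>\<^sub>-\<^sub>1(x) / u\<^sub>\<ell>(x)\<close>, and \<open>ln t \<le> t - 1\<close>. It starts nonnegative since
  \<open>u\<^sub>1 \<ge> 1\<close>, and by Jensen it never exceeds \<open>ln \<langle>u\<^sub>\<ell>, \<mu>\<rangle>\<close>. Finally \<open>\<langle>u\<^sub>\<ell>, \<mu>\<rangle> \<le> 1/\<kappa>\<close>,
  because some column has \<open>(K\<^sup>T u\<^sub>\<ell>)(y) \<le> \<nu>(y)\<close> while every column sum is at least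
  \<open>\<kappa> \<nu>(y) \<langle>u\<^sub>\<ell>, \<mu>\<rangle>\<close>. Hence \<open>q\<^sub>\<ell> < q_target\<close> cannot hold for all of the first
  \<open>1 + C/(\<epsilon> (1 - q_target))\<close> steps.
\<close>

locale async_sinkhorn =
  fixes K :: "'x::finite \<Rightarrow> 'y::finite \<Rightarrow> real" and mu :: "'x \<Rightarrow> real"
    and nu :: "'y \<Rightarrow> real" and \<kappa> :: real
  assumes mu_pos: "\<And>x. mu x > 0" and mu_sum: "(\<Sum>x\<in>UNIV. mu x) = 1"
    and nu_pos: "\<And>y. nu y > 0" and nu_sum: "(\<Sum>y\<in>UNIV. nu y) = 1"
    and kappa_pos: "\<kappa> > 0"
    and kernel_lower: "\<And>x y. \<kappa> * mu x * nu y \<le> K x y"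
    and kernel_upper: "\<And>x y. K x y \<le> mu x * nu y"
begin

definition v :: "nat \<Rightarrow> 'y \<Rightarrow> real" where "v l = async_v K mu nu l"
definition Kv :: "nat \<Rightarrow> 'x \<Rightarrow> real" where "Kv l x = (\<Sum>y\<in>UNIV. K x y * v l y)"
text \<open>\<open>u l\<close> is the paper's \<open>u\<^sup>(\<^sup>l\<^sup>+\<^sup>1\<^sup>)\<close>, the scaling computed from \<open>v\<^sup>(\<^sup>l\<^sup>)\<close>.\<close>
definition u :: "nat \<Rightarrow> 'x \<Rightarrow> real" where "u l x = mu x / Kv l x"
definition KTu :: "nat \<Rightarrow> 'y \<Rightarrow> real" where "KTu l y = (\<Sum>x\<in>UNIV. K x y * u l x)"
definition dual_mass :: "nat \<Rightarrow> real" where "dual_mass l = (\<Sum>x\<in>UNIV. u l x * mu x)"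
definition potential :: "nat \<Rightarrow> real" where "potential l = (\<Sum>x\<in>UNIV. mu x * ln (u l x))"

lemma kernel_pos: "K x y > 0"
  by (rule less_le_trans[OF _ kernel_lower]) (simp add: kappa_pos mu_pos nu_pos)

lemma v_0: "v 0 y = 1"
  by (simp add: v_def)

lemma v_Suc: "v (Suc l) y = min (v l y) (nu y / KTu l y)"
  by (simp add: v_def KTu_def u_def Kv_def u_step_def v_step_def)

lemma async_u_Suc: "async_u K mu nu (Suc l) = u l"
  by (simp add: async_u_def u_step_def u_def Kv_def v_def fun_eq_iff)

lemma async_q_Suc: "async_q K mu nu (Suc l) = (\<Sum>x\<in>UNIV. u l x * Kv (Suc l) x)"
  by (simp add: async_q_def async_u_Suc Kv_def v_def sum_distrib_left mult_ac)

lemma Kv_pos_if_v_pos: "(\<And>y. v l y > 0) \<Longrightarrow> Kv l x > 0"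
  unfolding Kv_def by (intro sum_pos) (auto intro: mult_pos_pos kernel_pos)

lemma v_pos_le_1: "0 < v l y \<and> v l y \<le> 1"
proof (induction l arbitrary: y)
  case 0
  then show ?case by (simp add: v_0)
next
  case (Suc l)
  have "u l x > 0" for x
    using Kv_pos_if_v_pos[of l x] Suc mu_pos[of x] by (simp add: u_def)
  then have "KTu l y > 0"
    unfolding KTu_def by (intro sum_pos) (auto intro: mult_pos_pos kernel_pos)
  then show ?case
    using Suc[of y] nu_pos[of y] by (auto simp add: v_Suc min_le_iff_disj)
qed

lemma Kv_pos: "Kv l x > 0"
  using Kv_pos_if_v_pos v_pos_le_1 by blast

lemma u_pos: "u l x > 0"
  using Kv_pos mu_pos by (simp add: u_def)

lemma KTu_pos: "KTu l y > 0"
  unfolding KTu_def by (intro sum_pos) (auto intro: mult_pos_pos kernel_pos u_pos)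

lemma dual_mass_pos: "dual_mass l > 0"
  unfolding dual_mass_def by (intro sum_pos) (auto intro: mult_pos_pos u_pos mu_pos)

lemma v_decreasing: "v (Suc l) y \<le> v l y"
  by (simp add: v_Suc)

lemma Kv_decreasing: "Kv (Suc l) x \<le> Kv l x"
  unfolding Kv_def by (intro sum_mono mult_left_mono v_decreasing) (auto intro: less_imp_le kernel_pos)

lemma u_increasing: "u l x \<le> u (Suc l) x"
  unfolding u_def using Kv_decreasing[of l x] Kv_pos[of "Suc l" x] mu_pos[of x]
  by (simp add: frac_le less_imp_le)

lemma KTu_increasing: "KTu l y \<le> KTu (Suc l) y"
  unfolding KTu_def by (intro sum_mono mult_left_mono u_increasing) (auto intro: less_imp_le kernel_pos)

text \<open>The running minimum only ever takes the newest candidate, since the candidates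
  \<open>\<nu>/K\<^sup>Tu\<close> decrease.\<close>
lemma v_Suc_eq_min_1: "v (Suc l) y = min 1 (nu y / KTu l y)"
proof (induction l)
  case 0
  then show ?case by (simp add: v_Suc v_0)
next
  case (Suc l)
  have "nu y / KTu (Suc l) y \<le> nu y / KTu l y"
    using KTu_increasing[of l y] KTu_pos[of l y] nu_pos[of y] by (simp add: frac_le less_imp_le)
  then show ?case
    using Suc by (simp add: v_Suc[of "Suc l"])
qed

lemma u_Kv: "u l x * Kv l x = mu x"
  using Kv_pos[of l x] by (simp add: u_def)

lemma sum_v_KTu: "(\<Sum>y\<in>UNIV. v l y * KTu l y) = 1"
proof -
  have "(\<Sum>y\<in>UNIV. v l y * KTu l y) = (\<Sum>y\<in>UNIV. \<Sum>x\<in>UNIV. u l x * (K x y * v l y))"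
    unfolding KTu_def by (simp add: sum_distrib_left mult_ac)
  also have "\<dots> = (\<Sum>x\<in>UNIV. u l x * Kv l x)"
    unfolding Kv_def by (subst sum.swap) (simp add: sum_distrib_left)
  finally show ?thesis
    by (simp add: u_Kv mu_sum)
qed

text \<open>Otherwise \<open>\<nu> \<le> v K\<^sup>Tu\<close> everywhere, strictly where \<open>v = 1\<close>, contradicting
  \<open>\<Sum> v K\<^sup>Tu = 1 = \<Sum> \<nu>\<close>; a coordinate with \<open>v = 1\<close> exists by induction.\<close>
lemma exists_KTu_le_nu: "\<exists>y. KTu l y \<le> nu y"
proof (induction l)
  case 0
  show ?case
  proof (rule ccontr)
    assume "\<not> ?case"
    then have "(\<Sum>y\<in>UNIV. nu y) < (\<Sum>y\<in>UNIV. v 0 y * KTu 0 y)"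
      by (intro sum_strict_mono) (auto simp: v_0 not_le)
    then show False
      using sum_v_KTu nu_sum by simp
  qed
next
  case (Suc l)
  then obtain y0 where y0: "KTu l y0 \<le> nu y0" by blast
  show ?case
  proof (rule ccontr)
    assume "\<not> ?case"
    then have big: "nu y < KTu (Suc l) y" for y by (simp add: not_le)
    have "nu y \<le> v (Suc l) y * KTu (Suc l) y" for y
    proof -
      have "nu y \<le> nu y / KTu l y * KTu (Suc l) y"
        using KTu_increasing[of l y] KTu_pos[of l y] nu_pos[of y] by (simp add: field_simps)
      then show ?thesis
        using big[of y] unfolding v_Suc_eq_min_1 by (auto simp: min_def)
    qed
    moreover have "v (Suc l) y0 = 1"
      using y0 KTu_pos[of l y0] by (simp add: v_Suc_eq_min_1)
    then have "nu y0 < v (Suc l) y0 * KTu (Suc l) y0"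
      using big by simp
    ultimately have "(\<Sum>y\<in>UNIV. nu y) < (\<Sum>y\<in>UNIV. v (Suc l) y * KTu (Suc l) y)"
      by (intro sum_strict_mono_ex1) auto
    then show False
      using sum_v_KTu nu_sum by simp
  qed
qed

lemma dual_mass_le: "dual_mass l \<le> 1 / \<kappa>"
proof -
  obtain y where y: "KTu l y \<le> nu y"
    using exists_KTu_le_nu by blast
  have "\<kappa> * nu y * dual_mass l = (\<Sum>x\<in>UNIV. (\<kappa> * mu x * nu y) * u l x)"
    by (simp add: dual_mass_def sum_distrib_left mult_ac)
  also have "\<dots> \<le> KTu l y"
    unfolding KTu_def by (intro sum_mono mult_right_mono kernel_lower) (auto intro: less_imp_le u_pos)
  finally have "\<kappa> * dual_mass l * nu y \<le> 1 * nu y"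
    using y by (simp add: mult_ac)
  then show ?thesis
    using nu_pos[of y] kappa_pos by (simp add: field_simps)
qed

lemma async_q_Suc_eq_ratio_sum: "async_q K mu nu (Suc l) = (\<Sum>x\<in>UNIV. mu x * (u l x / u (Suc l) x))"
  unfolding async_q_Suc
proof (rule sum.cong)
  fix x
  show "u l x * Kv (Suc l) x = mu x * (u l x / u (Suc l) x)"
    using Kv_pos[of "Suc l" x] mu_pos[of x] by (simp add: u_def field_simps)
qed simp

lemma potential_Suc_ge: "potential l + (1 - async_q K mu nu (Suc l)) \<le> potential (Suc l)"
proof -
  have "mu x * (1 - u l x / u (Suc l) x) \<le> mu x * ln (u (Suc l) x) - mu x * ln (u l x)" for x
  proof -
    have "ln (u l x / u (Suc l) x) \<le> u l x / u (Suc l) x - 1"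
      by (rule ln_le_minus_one) (simp add: u_pos)
    then have "1 - u l x / u (Suc l) x \<le> ln (u (Suc l) x) - ln (u l x)"
      using u_pos[of l x] u_pos[of "Suc l" x] by (simp add: ln_div)
    then show ?thesis
      using mu_pos[of x] by (simp add: right_diff_distrib[symmetric])
  qed
  then have "(\<Sum>x\<in>UNIV. mu x * (1 - u l x / u (Suc l) x)) \<le> potential (Suc l) - potential l"
    unfolding potential_def sum_subtractf[symmetric] by (rule sum_mono)
  then show ?thesis
    by (simp add: async_q_Suc_eq_ratio_sum right_diff_distrib sum_subtractf mu_sum)
qed

lemma potential_0_nonneg: "potential 0 \<ge> 0"
proof -
  have "u 0 x \<ge> 1" for x
  proof -
    have "Kv 0 x \<le> (\<Sum>y\<in>UNIV. mu x * nu y)"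
      unfolding Kv_def by (intro sum_mono) (simp add: v_0 kernel_upper)
    also have "\<dots> = mu x"
      by (simp add: sum_distrib_left[symmetric] nu_sum)
    finally show ?thesis
      using Kv_pos[of 0 x] by (simp add: u_def)
  qed
  then show ?thesis
    unfolding potential_def by (intro sum_nonneg mult_nonneg_nonneg) (auto intro: less_imp_le mu_pos)
qed

text \<open>Jensen for \<open>ln\<close>, via \<open>ln t \<le> t - 1\<close> at \<open>t = u(x)/\<langle>u,\<mu>\<rangle>\<close>.\<close>
lemma potential_le_ln_dual_mass: "potential l \<le> ln (dual_mass l)"
proof -
  let ?S = "dual_mass l"
  have "mu x * ln (u l x) \<le> mu x * (ln ?S + u l x / ?S - 1)" for x
  proof -
    have "ln (u l x / ?S) \<le> u l x / ?S - 1"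
      by (rule ln_le_minus_one) (simp add: u_pos dual_mass_pos)
    then show ?thesis
      using u_pos[of l x] dual_mass_pos[of l] mu_pos[of x] by (simp add: ln_div)
  qed
  then have "potential l \<le> (\<Sum>x\<in>UNIV. mu x * (ln ?S + u l x / ?S - 1))"
    unfolding potential_def by (rule sum_mono)
  also have "\<dots> = ln ?S * (\<Sum>x\<in>UNIV. mu x) + (\<Sum>x\<in>UNIV. u l x * mu x) / ?S - (\<Sum>x\<in>UNIV. mu x)"
    by (simp add: algebra_simps sum.distrib sum_subtractf sum_distrib_left sum_distrib_right
        sum_divide_distrib)
  also have "\<dots> = ln ?S"
    using dual_mass_pos[of l] by (simp add: mu_sum dual_mass_def[symmetric])
  finally show ?thesis .
qed

lemma potential_le: "potential l \<le> ln (1 / \<kappa>)"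
  by (rule order.trans[OF potential_le_ln_dual_mass]) (simp add: dual_mass_le dual_mass_pos kappa_pos)

lemma potential_ge_if_q_small:
  assumes "\<And>m. m < n \<Longrightarrow> async_q K mu nu (Suc m) < qt"
  shows "real n * (1 - qt) \<le> potential n"
  using assms
proof (induction n)
  case 0
  then show ?case using potential_0_nonneg by simp
next
  case (Suc n)
  then have "real n * (1 - qt) \<le> potential n" and "async_q K mu nu (Suc n) < qt"
    by simp_all
  then show ?case
    using potential_Suc_ge[of n] by (simp add: algebra_simps)
qed

theorem exists_async_q_ge:
  assumes "qt < 1"
  shows "\<exists>n. 1 \<le> n \<and> real n \<le> 1 + ln (1 / \<kappa>) / (1 - qt) \<and> async_q K mu nu n \<ge> qt"
proof -
  define L where "L = ln (1 / \<kappa>)"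
  have "L \<ge> 0"
    using potential_0_nonneg potential_le[of 0] by (simp add: L_def)
  define N where "N = nat \<lfloor>L / (1 - qt)\<rfloor> + 1"
  have N_le: "real N \<le> 1 + L / (1 - qt)"
    using \<open>L \<ge> 0\<close> assms unfolding N_def by (simp add: of_nat_nat)
  have "L / (1 - qt) < real N"
    using \<open>L \<ge> 0\<close> assms unfolding N_def by (simp add: of_nat_nat) linarith
  then have N_gt: "L < real N * (1 - qt)"
    using assms by (simp add: field_simps)
  have "\<exists>m < N. async_q K mu nu (Suc m) \<ge> qt"
  proof (rule ccontr)
    assume "\<not> ?thesis"
    then have "real N * (1 - qt) \<le> potential N"
      by (intro potential_ge_if_q_small) (simp add: not_le)
    then show False
      using potential_le[of N] N_gt by (simp add: L_def)
  qed
  then obtain m where "m < N" "async_q K mu nu (Suc m) \<ge> qt" by blast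
  moreover have "real (Suc m) \<le> 1 + L / (1 - qt)"
    using \<open>m < N\<close> N_le by linarith
  ultimately show ?thesis
    unfolding L_def by (intro exI[of _ "Suc m"]) simp
qed

theorem async_dual_mass_le:
  "1 \<le> l \<Longrightarrow> (\<Sum>x\<in>UNIV. async_u K mu nu l x * mu x) \<le> 1 / \<kappa>"
  using dual_mass_le[of "l - 1"] by (cases l) (simp_all add: async_u_Suc dual_mass_def)

end

lemma sk_kernel_bounds:
  assumes "\<And>x y. 0 \<le> c x y" "\<And>x y. c x y \<le> C" "eps > 0" "\<And>x. 0 \<le> mu x" "\<And>y. 0 \<le> nu y"
  shows "exp (- C / eps) * mu x * nu y \<le> sk_kernel eps c mu nu x y"
    and "sk_kernel eps c mu nu x y \<le> mu x * nu y"
proof -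
  have "- C / eps \<le> - c x y / eps"
    using assms(2)[of x y] assms(3) by (simp add: divide_right_mono)
  then show "exp (- C / eps) * mu x * nu y \<le> sk_kernel eps c mu nu x y"
    unfolding sk_kernel_def using assms(4)[of x] assms(5)[of y] by (simp add: mult_right_mono)
  have "exp (- c x y / eps) \<le> 1"
    using assms(1)[of x y] assms(3) by simp
  then show "sk_kernel eps c mu nu x y \<le> mu x * nu y"
    unfolding sk_kernel_def using assms(4)[of x] assms(5)[of y]
    by (simp add: mult_left_le_one_le mult.assoc)
qed

theorem mainTheorem4:
  fixes mu :: "'x::finite \<Rightarrow> real" and nu :: "'y::finite \<Rightarrow> real"
    and c :: "'x \<Rightarrow> 'y \<Rightarrow> real" and eps q_target :: real
  assumes mu_pos: "\<And>x. mu x > 0" and mu_sum: "(\<Sum>x\<in>UNIV. mu x) = 1"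
    and nu_pos: "\<And>y. nu y > 0" and nu_sum: "(\<Sum>y\<in>UNIV. nu y) = 1"
    and c_nonneg: "\<And>x y. c x y \<ge> 0"
    and eps_pos: "eps > 0"
    and q_lo: "0 < q_target" and q_hi: "q_target < 1"
  shows "let K = sk_kernel eps c mu nu; C = Max {c x y | x y. True} in
     (\<exists>n::nat. 1 \<le> n \<and> real n \<le> 2 + C / (eps * (1 - q_target)) \<and> async_q K mu nu n \<ge> q_target)
     \<and> (\<forall>l::nat. 1 \<le> l \<longrightarrow> (\<Sum>x\<in>UNIV. async_u K mu nu l x * mu x) \<le> exp (C / eps))"
proof -
  define C where "C = Max {c x y | x y. True}"
  have "finite {c x y | x y. True}"
    using finite_image_set2[of "\<lambda>_. True" "\<lambda>_. True" c] by simp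
  then have c_le: "c x y \<le> C" for x y
    unfolding C_def by (rule Max_ge) auto
  interpret async_sinkhorn "sk_kernel eps c mu nu" mu nu "exp (- C / eps)"
    using sk_kernel_bounds[OF c_nonneg c_le eps_pos less_imp_le[OF mu_pos] less_imp_le[OF nu_pos]]
    by unfold_locales (simp_all add: mu_pos nu_pos mu_sum nu_sum)
  have inv_kappa: "1 / exp (- C / eps) = exp (C / eps)"
    by (simp add: exp_minus divide_inverse)
  obtain n where "1 \<le> n" "real n \<le> 1 + C / (eps * (1 - q_target))"
    "async_q (sk_kernel eps c mu nu) mu nu n \<ge> q_target"
    using exists_async_q_ge[OF q_hi] by (auto simp: ln_div)
  then show ?thesis
    using async_dual_mass_le unfolding inv_kappa Let_def C_def[symmetric] by auto
qed

end
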